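(* Let $f:M\to M$ be a continuous map of a compact metric space and $\{\phi_n\}$ a subadditive sequence of continuous functions with $|\phi_n(x)|/n\le L$ for $\nu$-a.e. $x$, all $n$ and all $\nu\in\mathcal M_f$, for some $L>0$; let $\Phi=\inf_n\phi_n/n$ be its rate of growth. Fix $\epsilon>0$ and, for $N>0$, let $\mathcal M_N=\{\nu\in\mathcal M_f:\int\frac{\phi_n}{n}d\nu<\int\Phi\,d\nu+\epsilon\ \text{for all } n\ge N\}$ and $P_N(\phi)=\sup_{\nu\in\mathcal M_N}\{h(\nu)+\int\phi\,d\nu\}$. Then for every $N>0$, $$\lim_{n\to\infty}P_N\!\left(\frac{\phi_n}{n}\right)=\inf_{n>0}P_N\!\left(\frac{\phi_n}{n}\right).$$
   Context: $\mathcal M_f$ is the set of $f$-invariant Borel probability measures, $h(\nu)$ the metric entropy. Subadditive: $\phi_{n+m}\le\phi_n+\phi_m\circ f^n$. By Kingman's theorem $\Phi=\inf_n\phi_n/n=\lim_n\phi_n/n$ $\nu$-a.e. for every $\nu\in\mathcal M_f$. *)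

theory Defs
  imports "HOL-Probability.Probability"
begin

definition invariant_measures :: "'a::metric_space set \<Rightarrow> ('a \<Rightarrow> 'a) \<Rightarrow> 'a measure set" where
  "invariant_measures M f = {\<nu>. prob_space \<nu> \<and> sets \<nu> = sets (restrict_space borel M)
      \<and> f \<in> measurable \<nu> \<nu> \<and> distr \<nu> \<nu> f = \<nu>}"

definition finite_partitions :: "'a measure \<Rightarrow> 'a set set set" where
  "finite_partitions \<nu> = {P. finite P \<and> P \<subseteq> sets \<nu> \<and> \<Union>P = space \<nu>
      \<and> (\<forall>A\<in>P. \<forall>B\<in>P. A \<noteq> B \<longrightarrow> A \<inter> B = {})}"

definition partition_entropy :: "'a measure \<Rightarrow> 'a set set \<Rightarrow> real" where
  "partition_entropy \<nu> P = - (\<Sum>A\<in>P. measure \<nu> A * ln (measure \<nu> A))"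

definition iter_join :: "'a measure \<Rightarrow> ('a \<Rightarrow> 'a) \<Rightarrow> 'a set set \<Rightarrow> nat \<Rightarrow> 'a set set" where
  "iter_join \<nu> f P n = {space \<nu> \<inter> (\<Inter>i<n. (f ^^ i) -` c i) | c. \<forall>i<n. c i \<in> P}"

definition entropy_partition_map :: "'a measure \<Rightarrow> ('a \<Rightarrow> 'a) \<Rightarrow> 'a set set \<Rightarrow> real" where
  "entropy_partition_map \<nu> f P = lim (\<lambda>n. partition_entropy \<nu> (iter_join \<nu> f P n) / real n)"

definition metric_entropy :: "'a measure \<Rightarrow> ('a \<Rightarrow> 'a) \<Rightarrow> ereal" where
  "metric_entropy \<nu> f = (SUP P\<in>finite_partitions \<nu>. ereal (entropy_partition_map \<nu> f P))"

text \<open>Rate of growth \<Phi> = inf_n \<phi>_n / n (set to 0 where the infimum is -\<infinity>, a null set).\<close>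
definition growth_rate :: "(nat \<Rightarrow> 'a \<Rightarrow> real) \<Rightarrow> 'a \<Rightarrow> real" where
  "growth_rate \<phi> x = real_of_ereal (INF n\<in>{1..}. ereal (\<phi> n x / real n))"

definition M_N :: "'a::metric_space set \<Rightarrow> ('a \<Rightarrow> 'a) \<Rightarrow> (nat \<Rightarrow> 'a \<Rightarrow> real) \<Rightarrow> real \<Rightarrow> nat \<Rightarrow> 'a measure set" where
  "M_N M f \<phi> \<epsilon> N = {\<nu>\<in>invariant_measures M f. \<forall>n\<ge>N.
      (\<integral>x. \<phi> n x / real n \<partial>\<nu>) < (\<integral>x. growth_rate \<phi> x \<partial>\<nu>) + \<epsilon>}"

definition P_N :: "'a::metric_space set \<Rightarrow> ('a \<Rightarrow> 'a) \<Rightarrow> (nat \<Rightarrow> 'a \<Rightarrow> real) \<Rightarrow> real \<Rightarrow> nat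
    \<Rightarrow> ('a \<Rightarrow> real) \<Rightarrow> ereal" where
  "P_N M f \<phi> \<epsilon> N \<psi> = (SUP \<nu>\<in>M_N M f \<phi> \<epsilon> N. metric_entropy \<nu> f + ereal (\<integral>x. \<psi> x \<partial>\<nu>))"

end

theory Submission imports Defs begin

text \<open>For every \<open>\<nu>\<close> the sequence \<open>a\<^sub>n = \<integral>\<phi>\<^sub>n d\<nu>\<close> is subadditive with \<open>|a\<^sub>n| \<le> nL\<close>, so
  cutting \<open>n\<close> into blocks of length \<open>k\<close> gives \<open>a\<^sub>n/n \<le> a\<^sub>k/k + 2kL/n\<close>, uniformly in \<open>\<nu>\<close>.
  Taking suprema, \<open>P\<^sub>N(\<phi>\<^sub>n/n) \<le> P\<^sub>N(\<phi>\<^sub>k/k) + 2kL/n\<close>; letting \<open>n \<rightarrow> \<infinity>\<close> bounds the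
  limit superior by every \<open>P\<^sub>N(\<phi>\<^sub>k/k)\<close>, hence by their infimum, which trivially bounds the
  limit inferior from below.\<close>

lemma subadditive_le_multiple_average:
  fixes a :: "nat \<Rightarrow> real"
  assumes sub: "\<And>n m. n > 0 \<Longrightarrow> m > 0 \<Longrightarrow> a (n + m) \<le> a n + a m"
    and bound: "\<And>n. n > 0 \<Longrightarrow> \<bar>a n\<bar> \<le> real n * L"
    and k: "k > 0" and "n > 0"
  shows "a n \<le> real n * (a k / real k) + 2 * real k * L"
  using \<open>n > 0\<close>
proof (induction n rule: less_induct)
  case (less n)
  have avg_bound: "\<bar>a k / real k\<bar> \<le> L"
    using bound[OF k] k by (simp add: divide_le_eq mult.commute abs_divide)
  then have "L \<ge> 0" by (meson abs_ge_zero order_trans)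
  show ?case
  proof (cases "n \<le> k")
    case True
    have "a n \<le> real n * L" using bound[OF less.prems] by linarith
    also have "\<dots> \<le> real n * (a k / real k) + 2 * real n * L"
    proof -
      have "- (a k / real k) \<le> L" using avg_bound by linarith
      from mult_left_mono[OF this, of "real n"]
      have "- (real n * (a k / real k)) \<le> real n * L" by simp
      then show ?thesis by linarith
    qed
    also have "\<dots> \<le> real n * (a k / real k) + 2 * real k * L"
      using True \<open>L \<ge> 0\<close> by (simp add: mult_right_mono)
    finally show ?thesis by simp
  next
    case False
    then have n: "n = k + (n - k)" "n - k > 0" "n - k < n" using k by auto
    have "a n \<le> a k + a (n - k)" using sub[OF k n(2)] n(1) by metis
    also have "\<dots> \<le> a k + real (n - k) * (a k / real k) + 2 * real k * L"
      using less.IH[OF n(3,2)] by simp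
    also have "a k + real (n - k) * (a k / real k) = real n * (a k / real k)"
      using k False by (simp add: of_nat_diff field_simps)
    finally show ?thesis by simp
  qed
qed

lemma LIMSEQ_INF_if_le_plus_vanishing:
  fixes P :: "nat \<Rightarrow> ereal" and e :: "nat \<Rightarrow> nat \<Rightarrow> real"
  assumes le: "\<And>n k. n \<ge> 1 \<Longrightarrow> k \<ge> 1 \<Longrightarrow> P n \<le> P k + ereal (e k n)"
    and vanishing: "\<And>k. k \<ge> 1 \<Longrightarrow> e k \<longlonglongrightarrow> 0"
  shows "P \<longlonglongrightarrow> (INF n\<in>{1..}. P n)"
proof (rule order_tendstoI)
  fix y assume "y < (INF n\<in>{1..}. P n)"
  then show "\<forall>\<^sub>F n in sequentially. y < P n"
    by (intro eventually_sequentiallyI[of 1]) (auto simp: less_INF_D)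
next
  fix y assume "(INF n\<in>{1..}. P n) < y"
  then obtain k where k: "k \<ge> 1" "P k < y" by (auto simp: INF_less_iff)
  have "(\<lambda>n. P k + ereal (e k n)) \<longlonglongrightarrow> P k + ereal 0"
    using vanishing[OF k(1)] by (intro tendsto_add_ereal_general1 tendsto_ereal) auto
  then have "\<forall>\<^sub>F n in sequentially. P k + ereal (e k n) < y"
    using k(2) by (intro order_tendstoD(2)) auto
  then show "\<forall>\<^sub>F n in sequentially. P n < y"
    using eventually_ge_at_top[of 1]
    by eventually_elim (use le k(1) in \<open>blast intro: le_less_trans\<close>)
qed

lemma invariant_measures_space:
  "\<nu> \<in> invariant_measures M f \<Longrightarrow> space \<nu> = M"
  unfolding invariant_measures_def
  by (auto dest!: sets_eq_imp_space_eq simp: space_restrict_space)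

lemma invariant_measures_funpow:
  assumes "\<nu> \<in> invariant_measures M f"
  shows "f ^^ n \<in> measurable \<nu> \<nu> \<and> distr \<nu> \<nu> (f ^^ n) = \<nu>"
proof (induction n)
  case 0
  then show ?case by (simp add: id_def)
next
  case (Suc n)
  have f: "f \<in> measurable \<nu> \<nu>" "distr \<nu> \<nu> f = \<nu>"
    using assms unfolding invariant_measures_def by auto
  have "f ^^ n \<circ> f \<in> measurable \<nu> \<nu>"
    using Suc f(1) by (blast intro: measurable_comp)
  moreover have "distr \<nu> \<nu> (f ^^ n \<circ> f) = distr (distr \<nu> \<nu> f) \<nu> (f ^^ n)"
    using distr_distr[of "f ^^ n" \<nu> \<nu> f \<nu>] Suc f by simp
  ultimately show ?case
    unfolding funpow_Suc_right using Suc f(2) by (simp only:)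
qed

lemma invariant_measures_borel_measurable_continuous:
  assumes "\<nu> \<in> invariant_measures M f" "continuous_on M g"
  shows "g \<in> borel_measurable \<nu>"
proof -
  have "sets \<nu> = sets (restrict_space borel M)"
    using assms(1) unfolding invariant_measures_def by auto
  then show ?thesis using borel_measurable_continuous_on_restrict[OF assms(2)]
    by (simp cong: measurable_cong_sets)
qed

context
  fixes M :: "'a::metric_space set" and f :: "'a \<Rightarrow> 'a"
    and \<phi> :: "nat \<Rightarrow> 'a \<Rightarrow> real" and L :: real and \<nu> :: "'a measure"
  assumes cont: "\<And>n. n > 0 \<Longrightarrow> continuous_on M (\<phi> n)"
    and sub: "\<And>n m x. n > 0 \<Longrightarrow> m > 0 \<Longrightarrow> x \<in> M \<Longrightarrow> \<phi> (n + m) x \<le> \<phi> n x + \<phi> m ((f ^^ n) x)"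
    and invariant: "\<nu> \<in> invariant_measures M f"
    and bounded: "\<And>n. n > 0 \<Longrightarrow> AE x in \<nu>. \<bar>\<phi> n x\<bar> / real n \<le> L"
begin

interpretation prob_space \<nu>
  using invariant unfolding invariant_measures_def by auto

lemma AE_abs_le_linear: "n > 0 \<Longrightarrow> AE x in \<nu>. \<bar>\<phi> n x\<bar> \<le> real n * L"
  using bounded by (auto elim!: AE_mp simp: divide_le_eq mult.commute)

lemma integrable_subadditive: "n > 0 \<Longrightarrow> integrable \<nu> (\<phi> n)"
  using AE_abs_le_linear invariant_measures_borel_measurable_continuous[OF invariant cont]
  by (intro integrable_const_bound[where B = "real n * L"]) auto

lemma integral_subadditive_abs_le: "n > 0 \<Longrightarrow> \<bar>\<integral>x. \<phi> n x \<partial>\<nu>\<bar> \<le> real n * L"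
proof -
  assume n: "n > 0"
  have "\<bar>\<integral>x. \<phi> n x \<partial>\<nu>\<bar> \<le> (\<integral>x. \<bar>\<phi> n x\<bar> \<partial>\<nu>)"
    using integral_norm_bound[of \<nu> "\<phi> n"] by simp
  also have "\<dots> \<le> (\<integral>x. real n * L \<partial>\<nu>)"
    using integrable_subadditive[OF n] AE_abs_le_linear[OF n] by (intro integral_mono_AE) auto
  finally show ?thesis by (simp add: prob_space)
qed

lemma integral_subadditive_le:
  assumes n: "n > 0" and m: "m > 0"
  shows "(\<integral>x. \<phi> (n + m) x \<partial>\<nu>) \<le> (\<integral>x. \<phi> n x \<partial>\<nu>) + (\<integral>x. \<phi> m x \<partial>\<nu>)"
proof -
  have shift: "f ^^ n \<in> measurable \<nu> \<nu>" "distr \<nu> \<nu> (f ^^ n) = \<nu>"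
    using invariant_measures_funpow[OF invariant] by auto
  have meas_m: "\<phi> m \<in> borel_measurable \<nu>"
    using invariant_measures_borel_measurable_continuous[OF invariant cont[OF m]] .
  have int_shift: "integrable \<nu> (\<lambda>x. \<phi> m ((f ^^ n) x))"
    using integrable_distr_eq[OF shift(1) meas_m] shift(2) integrable_subadditive[OF m] by simp
  have "(\<integral>x. \<phi> (n + m) x \<partial>\<nu>) \<le> (\<integral>x. \<phi> n x + \<phi> m ((f ^^ n) x) \<partial>\<nu>)"
    using integrable_subadditive[of "n + m"] integrable_subadditive[OF n] int_shift
      sub[OF n m] invariant_measures_space[OF invariant] n
    by (intro integral_mono) auto
  also have "\<dots> = (\<integral>x. \<phi> n x \<partial>\<nu>) + (\<integral>x. \<phi> m ((f ^^ n) x) \<partial>\<nu>)"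
    using integrable_subadditive[OF n] int_shift by simp
  also have "(\<integral>x. \<phi> m ((f ^^ n) x) \<partial>\<nu>) = (\<integral>x. \<phi> m x \<partial>\<nu>)"
    using integral_distr[OF shift(1) meas_m] shift(2) by simp
  finally show ?thesis .
qed

lemma integral_average_le:
  assumes n: "n > 0" and k: "k > 0"
  shows "(\<integral>x. \<phi> n x / real n \<partial>\<nu>) \<le> (\<integral>x. \<phi> k x / real k \<partial>\<nu>) + 2 * real k * L / real n"
proof -
  have "(\<integral>x. \<phi> n x \<partial>\<nu>) \<le> real n * ((\<integral>x. \<phi> k x \<partial>\<nu>) / real k) + 2 * real k * L"
    using integral_subadditive_le integral_subadditive_abs_le k n
    by (rule subadditive_le_multiple_average[where a = "\<lambda>n. \<integral>x. \<phi> n x \<partial>\<nu>"])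
  then have "(\<integral>x. \<phi> n x \<partial>\<nu>) / real n \<le> (\<integral>x. \<phi> k x \<partial>\<nu>) / real k + 2 * real k * L / real n"
    using n by (simp add: field_simps)
  then show ?thesis by simp
qed

end

lemma P_N_le_plus:
  assumes "\<And>\<nu>. \<nu> \<in> M_N M f \<phi> \<epsilon> N \<Longrightarrow> (\<integral>x. \<psi> x \<partial>\<nu>) \<le> (\<integral>x. \<eta> x \<partial>\<nu>) + c"
  shows "P_N M f \<phi> \<epsilon> N \<psi> \<le> P_N M f \<phi> \<epsilon> N \<eta> + ereal c"
  unfolding P_N_def
proof (rule SUP_least)
  fix \<nu> assume \<nu>: "\<nu> \<in> M_N M f \<phi> \<epsilon> N"
  have "metric_entropy \<nu> f + ereal (\<integral>x. \<psi> x \<partial>\<nu>)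
      \<le> (metric_entropy \<nu> f + ereal (\<integral>x. \<eta> x \<partial>\<nu>)) + ereal c"
    using assms[OF \<nu>] by (simp add: add.assoc add_left_mono)
  also have "\<dots> \<le> (SUP \<nu>\<in>M_N M f \<phi> \<epsilon> N. metric_entropy \<nu> f + ereal (\<integral>x. \<eta> x \<partial>\<nu>)) + ereal c"
    using \<nu> by (intro add_right_mono SUP_upper)
  finally show "metric_entropy \<nu> f + ereal (\<integral>x. \<psi> x \<partial>\<nu>) \<le> \<dots>" .
qed

theorem lemma6p2:
  fixes M :: "'a::metric_space set" and f :: "'a \<Rightarrow> 'a"
    and \<phi> :: "nat \<Rightarrow> 'a \<Rightarrow> real" and L \<epsilon> :: real
  assumes "compact M"
    and "continuous_on M f" and "f ` M \<subseteq> M"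
    and "\<And>n. n > 0 \<Longrightarrow> continuous_on M (\<phi> n)"
    and "\<And>n m x. n > 0 \<Longrightarrow> m > 0 \<Longrightarrow> x \<in> M \<Longrightarrow> \<phi> (n + m) x \<le> \<phi> n x + \<phi> m ((f ^^ n) x)"
    and "L > 0"
    and "\<And>\<nu> n. \<nu> \<in> invariant_measures M f \<Longrightarrow> n > 0 \<Longrightarrow>
           AE x in \<nu>. \<bar>\<phi> n x\<bar> / real n \<le> L"
    and "\<epsilon> > 0"
  shows "\<forall>N>0. ((\<lambda>n. P_N M f \<phi> \<epsilon> N (\<lambda>x. \<phi> n x / real n))
                  \<longlonglongrightarrow> (INF n\<in>{1..}. P_N M f \<phi> \<epsilon> N (\<lambda>x. \<phi> n x / real n)))"
proof (intro allI impI)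
  fix N :: nat
  have "P_N M f \<phi> \<epsilon> N (\<lambda>x. \<phi> n x / real n)
      \<le> P_N M f \<phi> \<epsilon> N (\<lambda>x. \<phi> k x / real k) + ereal (2 * real k * L / real n)"
    if "n \<ge> 1" "k \<ge> 1" for n k
  proof (rule P_N_le_plus)
    fix \<nu> assume "\<nu> \<in> M_N M f \<phi> \<epsilon> N"
    then have \<nu>: "\<nu> \<in> invariant_measures M f" by (simp add: M_N_def)
    show "(\<integral>x. \<phi> n x / real n \<partial>\<nu>) \<le> (\<integral>x. \<phi> k x / real k \<partial>\<nu>) + 2 * real k * L / real n"
      using integral_average_le[OF assms(4,5) \<nu> assms(7)[OF \<nu>]] that by simp
  qed
  moreover have "(\<lambda>n. 2 * real k * L / real n) \<longlonglongrightarrow> 0" for k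
    by (rule lim_const_over_n)
  ultimately show "(\<lambda>n. P_N M f \<phi> \<epsilon> N (\<lambda>x. \<phi> n x / real n))
      \<longlonglongrightarrow> (INF n\<in>{1..}. P_N M f \<phi> \<epsilon> N (\<lambda>x. \<phi> n x / real n))"
    by (rule LIMSEQ_INF_if_le_plus_vanishing)
qed

end
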